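(* In the standing setting below, assume $A$ has full column rank and that $(w_t,Q_t)_{t=1}^T$ is a quadrature rule on $\mathrm{SO}(d+1)$ with positive weights and degree of accuracy $n\ge K$. Let $P_A=\sum_j(\beta_{\mathrm{aug}})_j\varphi_j$, where $\beta_{\mathrm{aug}}$ minimises $L_{\mathrm{aug}}$. Then $P_A$ is exactly rotation invariant: $\varepsilon_{\mathrm{sym}}(P_A)=0$.
   Context: $S^{N,d}=(S^d)^N$ with $L^2$ taken w.r.t. the product of normalised uniform surface measures; $Q\in\mathrm{SO}(d+1)$ acts elementwise, $Q\cdot(\mathbf r_1,\dots,\mathbf r_N)=(Q\mathbf r_1,\dots,Q\mathbf r_N)$. $V^{N,d}_K$: restrictions to $S^{N,d}$ of complex polynomials of total degree $\le K$ in Cartesian coordinates; $B^{N,d}_K$: its rotation-invariant subspace. Fix an orthonormal basis $\varphi_1,\dots,\varphi_m$ of $V^{N,d}_K$ with $\varphi_1,\dots,\varphi_{m_{\mathrm I}}$ a basis of $B^{N,d}_K$ and the rest a basis of its orthogonal complement. Data: points $R_1,\dots,R_n\in S^{N,d}$, a rotation-invariant target $f$, $Y_i=f(R_i)$; design matrix $A_{ij}=\varphi_j(R_i)$; $(A\circ Q)_{ij}=\varphi_j(Q\cdot R_i)$. Augmentation parameters: weights $w_1,\dots,w_T$ with $\sum_tw_t=1$ and rotations $Q_1,\dots,Q_T$; the augmented loss is $L_{\mathrm{aug}}(\beta)=\frac12\sum_tw_t\|(A\circ Q_t)\beta-Y\|^2$. A quadrature rule $(w_t,Q_t)_{t=1}^T$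 on $\mathrm{SO}(d+1)$ has degree of accuracy $n$ if $\sum_tw_tp(Q_t)=\int_{\mathrm{SO}(d+1)}p\,dH$ for every polynomial $p$ of degree $\le n$ in the matrix entries of $Q$, where $H$ is the normalised Haar measure. $\varepsilon_{\mathrm{sym}}(g)=\|g-\mathrm{sym}(g)\|_{L^2}$ with $\mathrm{sym}$ the $L^2$-orthogonal projection onto rotation-invariant functions. *)

theory Defs
  imports "HOL-Probability.Probability"
begin

text \<open>Conventions. The ambient space R^(d+1) is real^'n (so CARD('n) = d+1),
the particle index set {1..N} is the finite type 'p. A configuration
(r_1,...,r_N) is a function 'p => real^'n.\<close>

type_synonym ('p,'n) config = "'p \<Rightarrow> real^'n"

definition SO :: "(real^'n^'n) set" where
  "SO = {Q. orthogonal_matrix Q \<and> det Q = 1}"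

definition config_sphere :: "('p::finite,'n::finite) config set" where
  "config_sphere = {R. \<forall>p. norm (R p) = 1}"

definition rot_act :: "real^'n^'n \<Rightarrow> ('p,'n::finite) config \<Rightarrow> ('p,'n) config" where
  "rot_act Q R = (\<lambda>p. Q *v R p)"

text \<open>Normalised uniform surface measure on S^d: radial projection of the
uniform probability measure on the unit ball (the cone measure).\<close>
definition sphere_measure :: "(real^'n::finite) measure" where
  "sphere_measure = distr (uniform_measure lborel (ball 0 1)) borel (\<lambda>x. x /\<^sub>R norm x)"

definition config_measure :: "('p::finite,'n::finite) config measure" where
  "config_measure = PiM UNIV (\<lambda>_. sphere_measure)"

definition cmono :: "('p::finite \<Rightarrow> 'n::finite \<Rightarrow> nat) \<Rightarrow> ('p,'n) config \<Rightarrow> complex" where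
  "cmono \<alpha> R = (\<Prod>p\<in>UNIV. \<Prod>i\<in>UNIV. complex_of_real ((R p $ i) ^ \<alpha> p i))"

definition cdeg :: "('p::finite \<Rightarrow> 'n::finite \<Rightarrow> nat) \<Rightarrow> nat" where
  "cdeg \<alpha> = (\<Sum>p\<in>UNIV. \<Sum>i\<in>UNIV. \<alpha> p i)"

text \<open>V^{N,d}_K: (functions agreeing on S^{N,d} with) complex polynomials
of total degree \<le> K.\<close>
definition polyV :: "nat \<Rightarrow> (('p::finite,'n::finite) config \<Rightarrow> complex) set" where
  "polyV K = {f. \<exists>E c. finite E \<and> (\<forall>\<alpha>\<in>E. cdeg \<alpha> \<le> K) \<and>
       (\<forall>R\<in>config_sphere. f R = (\<Sum>\<alpha>\<in>E. c \<alpha> * cmono \<alpha> R))}"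

definition rot_invariant :: "(('p::finite,'n::finite) config \<Rightarrow> complex) \<Rightarrow> bool" where
  "rot_invariant h \<longleftrightarrow> (\<forall>Q\<in>SO. \<forall>R\<in>config_sphere. h (rot_act Q R) = h R)"

definition polyB :: "nat \<Rightarrow> (('p::finite,'n::finite) config \<Rightarrow> complex) set" where
  "polyB K = {f \<in> polyV K. rot_invariant f}"

definition span_on :: "(nat \<Rightarrow> ('p::finite,'n::finite) config \<Rightarrow> complex) \<Rightarrow> nat set
     \<Rightarrow> (('p,'n) config \<Rightarrow> complex) set" where
  "span_on \<phi> J = {g. \<exists>c. \<forall>R\<in>config_sphere. g R = (\<Sum>j\<in>J. c j * \<phi> j R)}"

definition L2inner :: "(('p::finite,'n::finite) config \<Rightarrow> complex) \<Rightarrow> (('p,'n) config \<Rightarrow> complex) \<Rightarrow> complex" where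
  "L2inner f g = integral\<^sup>L config_measure (\<lambda>R. f R * cnj (g R))"

definition L2norm :: "(('p::finite,'n::finite) config \<Rightarrow> complex) \<Rightarrow> real" where
  "L2norm f = sqrt (integral\<^sup>L config_measure (\<lambda>R. (cmod (f R))\<^sup>2))"

definition L2 :: "(('p::finite,'n::finite) config \<Rightarrow> complex) set" where
  "L2 = {f. f \<in> borel_measurable config_measure \<and>
            integrable config_measure (\<lambda>R. (cmod (f R))\<^sup>2)}"

text \<open>sym: L^2-orthogonal projection onto the rotation-invariant functions
(a representative h: invariant, in L^2, with g - h orthogonal to all
invariant L^2 functions).\<close>
definition sym :: "(('p::finite,'n::finite) config \<Rightarrow> complex) \<Rightarrow> (('p,'n) config \<Rightarrow> complex)" where
  "sym g = (SOME h. h \<in> L2 \<and> rot_invariant h \<and>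
              (\<forall>u\<in>L2. rot_invariant u \<longrightarrow> L2inner (\<lambda>R. g R - h R) u = 0))"

definition eps_sym :: "(('p::finite,'n::finite) config \<Rightarrow> complex) \<Rightarrow> real" where
  "eps_sym g = L2norm (\<lambda>R. g R - sym g R)"

definition is_haar_SO :: "(real^'n::finite^'n) measure \<Rightarrow> bool" where
  "is_haar_SO H \<longleftrightarrow> prob_space H \<and> sets H = sets borel \<and> emeasure H SO = 1 \<and>
     (\<forall>Q\<in>SO. distr H borel (\<lambda>M. Q ** M) = H)"

definition mat_mono :: "('n::finite \<Rightarrow> 'n \<Rightarrow> nat) \<Rightarrow> real^'n^'n \<Rightarrow> complex" where
  "mat_mono \<beta> Q = (\<Prod>i\<in>UNIV. \<Prod>j\<in>UNIV. complex_of_real ((Q $ i $ j) ^ \<beta> i j))"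

definition mat_deg :: "('n::finite \<Rightarrow> 'n \<Rightarrow> nat) \<Rightarrow> nat" where
  "mat_deg \<beta> = (\<Sum>i\<in>UNIV. \<Sum>j\<in>UNIV. \<beta> i j)"

definition quadrature_degree ::
  "(real^'n::finite^'n) measure \<Rightarrow> nat \<Rightarrow> (nat \<Rightarrow> real) \<Rightarrow> (nat \<Rightarrow> real^'n^'n) \<Rightarrow> nat \<Rightarrow> bool" where
  "quadrature_degree H T w Q n \<longleftrightarrow>
     (\<forall>t<T. Q t \<in> SO) \<and>
     (\<forall>E c. finite E \<longrightarrow> (\<forall>\<beta>\<in>E. mat_deg \<beta> \<le> n) \<longrightarrow>
        (\<Sum>t<T. complex_of_real (w t) * (\<Sum>\<beta>\<in>E. c \<beta> * mat_mono \<beta> (Q t)))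
          = integral\<^sup>L H (\<lambda>M. \<Sum>\<beta>\<in>E. c \<beta> * mat_mono \<beta> M))"

definition L_aug :: "(nat \<Rightarrow> ('p::finite,'n::finite) config \<Rightarrow> complex) \<Rightarrow> nat \<Rightarrow>
     (nat \<Rightarrow> ('p,'n) config) \<Rightarrow> nat \<Rightarrow> (nat \<Rightarrow> complex) \<Rightarrow>
     nat \<Rightarrow> (nat \<Rightarrow> real) \<Rightarrow> (nat \<Rightarrow> real^'n^'n) \<Rightarrow> (nat \<Rightarrow> complex) \<Rightarrow> real" where
  "L_aug \<phi> m Rs npts Y T w Q \<beta> =
     (1/2) * (\<Sum>t<T. w t * (\<Sum>i<npts.
        (cmod ((\<Sum>j<m. \<phi> j (rot_act (Q t) (Rs i)) * \<beta> j) - Y i))\<^sup>2))"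

end

theory Submission
  imports Defs
begin

text \<open>
  Let \<open>F\<close> be a polynomial of degree \<open>\<le> K\<close> agreeing with \<open>P_A\<close> on the sphere and let
  \<open>a = \<Sum>\<^sub>t w\<^sub>t F(Q\<^sub>t \<cdot>)\<close> be its average over the quadrature nodes. Since the rule is exact in
  degree \<open>\<le> K\<close> and Haar measure is invariant, \<open>a\<close> is rotation invariant. Hence the coefficient
  vector of \<open>a\<close> has augmented loss \<open>\<Sum>\<^sub>i \<bar>a(R\<^sub>i) - Y\<^sub>i\<bar>\<^sup>2 / 2\<close>, while that of \<open>\<beta>\<close> exceeds this by
  the weighted variance \<open>\<Sum>\<^sub>i \<Sum>\<^sub>t w\<^sub>t \<bar>F(Q\<^sub>t R\<^sub>i) - a(R\<^sub>i)\<bar>\<^sup>2 / 2\<close>. Minimality of \<open>\<beta>\<close> and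
  positivity of the weights force \<open>F(Q\<^sub>t R\<^sub>i) = a(R\<^sub>i)\<close>, and full column rank of \<open>A\<close> (the points
  are unisolvent for \<open>V\<^sub>K\<close>) upgrades this to \<open>F = a\<close> on the sphere. So \<open>P_A\<close> coincides on the
  sphere with an invariant \<open>L\<^sup>2\<close> function and is its own symmetrisation.
\<close>

section \<open>Polynomial functions of real coordinates\<close>

definition monomial :: "('i::finite \<Rightarrow> nat) \<Rightarrow> ('i \<Rightarrow> real) \<Rightarrow> complex" where
  "monomial \<alpha> x = (\<Prod>i\<in>UNIV. complex_of_real (x i ^ \<alpha> i))"

definition total_degree :: "('i::finite \<Rightarrow> nat) \<Rightarrow> nat" where
  "total_degree \<alpha> = (\<Sum>i\<in>UNIV. \<alpha> i)"

definition poly_in :: "('x \<Rightarrow> 'i::finite \<Rightarrow> real) \<Rightarrow> nat \<Rightarrow> ('x \<Rightarrow> complex) \<Rightarrow> bool" where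
  "poly_in crd n F \<longleftrightarrow> (\<exists>E c. finite E \<and> (\<forall>\<alpha>\<in>E. total_degree \<alpha> \<le> n) \<and>
      (\<forall>x. F x = (\<Sum>\<alpha>\<in>E. c \<alpha> * monomial \<alpha> (crd x))))"

lemma poly_inE:
  assumes "poly_in crd n F"
  obtains E c where "finite E" "\<And>\<alpha>. \<alpha> \<in> E \<Longrightarrow> total_degree \<alpha> \<le> n"
    "F = (\<lambda>x. \<Sum>\<alpha>\<in>E. c \<alpha> * monomial \<alpha> (crd x))"
  using assms unfolding poly_in_def by fastforce

lemma poly_in_mono: "poly_in crd n F \<Longrightarrow> n \<le> n' \<Longrightarrow> poly_in crd n' F"
  unfolding poly_in_def by (meson order_trans)

lemma poly_in_monomial:
  "total_degree \<alpha> \<le> n \<Longrightarrow> poly_in crd n (\<lambda>x. monomial \<alpha> (crd x))"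
  unfolding poly_in_def by (intro exI[of _ "{\<alpha>}"] exI[of _ "\<lambda>_. 1"]) auto

lemma poly_in_const: "poly_in crd n (\<lambda>x. c)"
  unfolding poly_in_def
  by (intro exI[of _ "{\<lambda>_. 0}"] exI[of _ "\<lambda>_. c"]) (simp add: monomial_def total_degree_def)

lemma poly_in_coord: "poly_in crd 1 (\<lambda>x. complex_of_real (crd x i))"
proof -
  define \<alpha> where "\<alpha> = (\<lambda>j. if j = i then 1 else (0::nat))"
  have "monomial \<alpha> y = complex_of_real (y i)" for y
    unfolding monomial_def \<alpha>_def by (simp add: if_distrib cong: if_cong)
  moreover have "total_degree \<alpha> = 1"
    unfolding total_degree_def \<alpha>_def by simp
  ultimately show ?thesis
    using poly_in_monomial[of \<alpha> 1 crd] by simp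
qed

lemma sum_restrict_coeffs:
  fixes c g :: "'a \<Rightarrow> 'b::semiring_0"
  shows "finite B \<Longrightarrow> A \<subseteq> B \<Longrightarrow> (\<Sum>\<alpha>\<in>B. (if \<alpha> \<in> A then c \<alpha> else 0) * g \<alpha>) = (\<Sum>\<alpha>\<in>A. c \<alpha> * g \<alpha>)"
  by (rule sum.mono_neutral_cong_right) auto

lemma poly_in_add:
  assumes "poly_in crd n F" "poly_in crd n G"
  shows "poly_in crd n (\<lambda>x. F x + G x)"
proof -
  obtain E c where E: "finite E" "\<And>\<alpha>. \<alpha> \<in> E \<Longrightarrow> total_degree \<alpha> \<le> n"
    "F = (\<lambda>x. \<Sum>\<alpha>\<in>E. c \<alpha> * monomial \<alpha> (crd x))"
    using assms(1) by (rule poly_inE) blast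
  obtain D d where D: "finite D" "\<And>\<alpha>. \<alpha> \<in> D \<Longrightarrow> total_degree \<alpha> \<le> n"
    "G = (\<lambda>x. \<Sum>\<alpha>\<in>D. d \<alpha> * monomial \<alpha> (crd x))"
    using assms(2) by (rule poly_inE) blast
  define e where "e \<alpha> = (if \<alpha> \<in> E then c \<alpha> else 0) + (if \<alpha> \<in> D then d \<alpha> else 0)" for \<alpha>
  have "F x + G x = (\<Sum>\<alpha>\<in>E \<union> D. e \<alpha> * monomial \<alpha> (crd x))" for x
    using E(1,3) D(1,3)
    by (simp add: e_def distrib_right sum.distrib sum_restrict_coeffs)
  then show ?thesis
    unfolding poly_in_def using E(1,2) D(1,2)
    by (intro exI[of _ "E \<union> D"] exI[of _ e]) auto
qed

lemma poly_in_cmult: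
  assumes "poly_in crd n F" shows "poly_in crd n (\<lambda>x. a * F x)"
proof -
  obtain E c where E: "finite E" "\<And>\<alpha>. \<alpha> \<in> E \<Longrightarrow> total_degree \<alpha> \<le> n"
    "F = (\<lambda>x. \<Sum>\<alpha>\<in>E. c \<alpha> * monomial \<alpha> (crd x))"
    using assms by (rule poly_inE) blast
  then show ?thesis
    unfolding poly_in_def
    by (intro exI[of _ E] exI[of _ "\<lambda>\<alpha>. a * c \<alpha>"]) (auto simp: sum_distrib_left mult.assoc)
qed

lemma poly_in_diff:
  "poly_in crd n F \<Longrightarrow> poly_in crd n G \<Longrightarrow> poly_in crd n (\<lambda>x. F x - G x)"
  using poly_in_add[of crd n F "\<lambda>x. (-1) * G x"] poly_in_cmult[of crd n G "-1"] by simp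

lemma poly_in_sum:
  assumes "finite A" "\<And>a. a \<in> A \<Longrightarrow> poly_in crd n (F a)"
  shows "poly_in crd n (\<lambda>x. \<Sum>a\<in>A. F a x)"
  using assms by (induction A rule: finite_induct) (auto intro: poly_in_add poly_in_const)

lemma monomial_add: "monomial (\<lambda>i. \<alpha> i + \<delta> i) x = monomial \<alpha> x * monomial \<delta> x"
  by (simp add: monomial_def power_add prod.distrib)

lemma poly_in_mult:
  assumes "poly_in crd n F" "poly_in crd k G"
  shows "poly_in crd (n + k) (\<lambda>x. F x * G x)"
proof -
  obtain E c where E: "finite E" "\<And>\<alpha>. \<alpha> \<in> E \<Longrightarrow> total_degree \<alpha> \<le> n"
    "F = (\<lambda>x. \<Sum>\<alpha>\<in>E. c \<alpha> * monomial \<alpha> (crd x))"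
    using assms(1) by (rule poly_inE) blast
  obtain D d where D: "finite D" "\<And>\<alpha>. \<alpha> \<in> D \<Longrightarrow> total_degree \<alpha> \<le> k"
    "G = (\<lambda>x. \<Sum>\<alpha>\<in>D. d \<alpha> * monomial \<alpha> (crd x))"
    using assms(2) by (rule poly_inE) blast
  have "F x * G x = (\<Sum>\<alpha>\<in>E. \<Sum>\<delta>\<in>D. (c \<alpha> * d \<delta>) * monomial (\<lambda>i. \<alpha> i + \<delta> i) (crd x))" for x
    by (simp add: E(3) D(3) sum_product monomial_add mult_ac)
  moreover have "total_degree (\<lambda>i. \<alpha> i + \<delta> i) \<le> n + k" if "\<alpha> \<in> E" "\<delta> \<in> D" for \<alpha> \<delta>
    using E(2)[OF that(1)] D(2)[OF that(2)] by (simp add: total_degree_def sum.distrib)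
  ultimately show ?thesis
    using E(1) D(1) by (auto intro!: poly_in_sum poly_in_cmult poly_in_monomial)
qed

lemma poly_in_prod:
  assumes "finite A" "\<And>a. a \<in> A \<Longrightarrow> poly_in crd (k a) (F a)"
  shows "poly_in crd (\<Sum>a\<in>A. k a) (\<lambda>x. \<Prod>a\<in>A. F a x)"
  using assms by (induction A rule: finite_induct) (auto intro: poly_in_mult poly_in_const)

lemma poly_in_power:
  assumes "poly_in crd n F" shows "poly_in crd (k * n) (\<lambda>x. F x ^ k)"
  using poly_in_prod[of "{..<k}" crd "\<lambda>_. n" "\<lambda>_. F"] assms by simp

lemma poly_in_linear:
  assumes "finite K"
  shows "poly_in crd 1 (\<lambda>x. \<Sum>k\<in>K. a k * complex_of_real (crd x (\<iota> k)))"
  using assms by (intro poly_in_sum poly_in_cmult poly_in_coord)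

lemma poly_in_compose:
  fixes L :: "'x \<Rightarrow> 'y" and crd' :: "'y \<Rightarrow> 'j::finite \<Rightarrow> real"
  assumes "poly_in crd' n F"
    and "\<And>j. poly_in crd 1 (\<lambda>x. complex_of_real (crd' (L x) j))"
  shows "poly_in crd n (\<lambda>x. F (L x))"
proof -
  obtain E c where E: "finite E" "\<And>\<alpha>. \<alpha> \<in> E \<Longrightarrow> total_degree \<alpha> \<le> n"
    "F = (\<lambda>y. \<Sum>\<alpha>\<in>E. c \<alpha> * monomial \<alpha> (crd' y))"
    using assms(1) by (rule poly_inE) blast
  have "poly_in crd (total_degree \<alpha>) (\<lambda>x. monomial \<alpha> (crd' (L x)))" for \<alpha>
    using poly_in_prod[of UNIV crd "\<lambda>j. \<alpha> j * 1"] poly_in_power[OF assms(2)]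
    by (simp add: monomial_def total_degree_def)
  then have "poly_in crd n (\<lambda>x. monomial \<alpha> (crd' (L x)))" if "\<alpha> \<in> E" for \<alpha>
    using E(2)[OF that] by (rule poly_in_mono)
  then show ?thesis
    unfolding E(3) by (intro poly_in_sum poly_in_cmult E(1))
qed

lemma poly_in_measurable:
  assumes "poly_in crd n F" "\<And>i. (\<lambda>x. crd x i) \<in> borel_measurable M"
  shows "F \<in> borel_measurable M"
proof -
  obtain E c where F: "F = (\<lambda>x. \<Sum>\<alpha>\<in>E. c \<alpha> * monomial \<alpha> (crd x))"
    using assms(1) by (rule poly_inE) blast
  show ?thesis
    unfolding F monomial_def using assms(2) by measurable
qed

lemma poly_in_bounded:
  assumes "poly_in crd n F" "\<And>x i. x \<in> S \<Longrightarrow> \<bar>crd x i\<bar> \<le> 1"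
  shows "\<exists>C. \<forall>x\<in>S. cmod (F x) \<le> C"
proof -
  obtain E c where F: "F = (\<lambda>x. \<Sum>\<alpha>\<in>E. c \<alpha> * monomial \<alpha> (crd x))"
    using assms(1) by (rule poly_inE) blast
  have "cmod (F x) \<le> (\<Sum>\<alpha>\<in>E. cmod (c \<alpha>))" if "x \<in> S" for x
  proof -
    have "cmod (monomial \<alpha> (crd x)) \<le> 1" for \<alpha>
      unfolding monomial_def prod_norm[symmetric] norm_of_real
      using assms(2)[OF that] by (intro prod_le_1) (auto simp: power_abs power_le_one)
    then have "cmod (c \<alpha> * monomial \<alpha> (crd x)) \<le> cmod (c \<alpha>)" for \<alpha>
      by (simp add: norm_mult mult_left_le)
    then show ?thesis
      unfolding F by (rule sum_norm_le)
  qed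
  then show ?thesis by blast
qed

section \<open>Matrix and configuration coordinates\<close>

lemma monomial_case_prod:
  "monomial (case_prod \<beta>) (\<lambda>(a, b). X a b) =
    (\<Prod>a\<in>UNIV. \<Prod>b\<in>UNIV. complex_of_real (X a b ^ \<beta> a b))"
  unfolding monomial_def prod.cartesian_product UNIV_Times_UNIV by (intro prod.cong) auto

lemma total_degree_case_prod: "total_degree (case_prod \<beta>) = (\<Sum>a\<in>UNIV. \<Sum>b\<in>UNIV. \<beta> a b)"
  unfolding total_degree_def sum.cartesian_product UNIV_Times_UNIV by (intro sum.cong) auto

lemma poly_in_pair_coords_iff:
  fixes X :: "'x \<Rightarrow> 'a::finite \<Rightarrow> 'b::finite \<Rightarrow> real"
  shows "poly_in (\<lambda>x (a, b). X x a b) n F \<longleftrightarrow>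
    (\<exists>E c. finite E \<and> (\<forall>\<beta>\<in>E. (\<Sum>a\<in>UNIV. \<Sum>b\<in>UNIV. \<beta> a b) \<le> n) \<and>
      (\<forall>x. F x = (\<Sum>\<beta>\<in>E. c \<beta> * (\<Prod>a\<in>UNIV. \<Prod>b\<in>UNIV. complex_of_real (X x a b ^ \<beta> a b)))))"
proof -
  let ?deg = "\<lambda>\<beta>::'a \<Rightarrow> 'b \<Rightarrow> nat. \<Sum>a\<in>UNIV. \<Sum>b\<in>UNIV. \<beta> a b"
  let ?mono = "\<lambda>(\<beta>::'a \<Rightarrow> 'b \<Rightarrow> nat) x. \<Prod>a\<in>UNIV. \<Prod>b\<in>UNIV. complex_of_real (X x a b ^ \<beta> a b)"
  show ?thesis
  proof
    assume "poly_in (\<lambda>x (a, b). X x a b) n F"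
    then obtain E c where E: "finite E" "\<And>\<alpha>. \<alpha> \<in> E \<Longrightarrow> total_degree \<alpha> \<le> n"
      "F = (\<lambda>x. \<Sum>\<alpha>\<in>E. c \<alpha> * monomial \<alpha> (\<lambda>(a, b). X x a b))"
      by (rule poly_inE) blast
    have "inj_on curry E"
      by (rule inj_onI) (metis case_prod_curry)
    have "F x = (\<Sum>\<beta>\<in>curry ` E. c (case_prod \<beta>) * ?mono \<beta> x)" for x
      unfolding E(3)
      by (rule sum.reindex_cong[OF \<open>inj_on curry E\<close> refl, symmetric])
        (simp only: monomial_case_prod[symmetric] case_prod_curry)
    moreover have "\<forall>\<beta>\<in>curry ` E. ?deg \<beta> \<le> n"
      using E(2) by (auto simp: total_degree_case_prod[symmetric])
    ultimately show "\<exists>E c. finite E \<and> (\<forall>\<beta>\<in>E. ?deg \<beta> \<le> n) \<and> (\<forall>x. F x = (\<Sum>\<beta>\<in>E. c \<beta> * ?mono \<beta> x))"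
      using E(1) by (intro exI[of _ "curry ` E"] exI[of _ "\<lambda>\<beta>. c (case_prod \<beta>)"]) simp
  next
    assume "\<exists>E c. finite E \<and> (\<forall>\<beta>\<in>E. ?deg \<beta> \<le> n) \<and> (\<forall>x. F x = (\<Sum>\<beta>\<in>E. c \<beta> * ?mono \<beta> x))"
    then obtain E c where E: "finite E" "\<forall>\<beta>\<in>E. ?deg \<beta> \<le> n" "\<And>x. F x = (\<Sum>\<beta>\<in>E. c \<beta> * ?mono \<beta> x)"
      by blast
    have "inj_on case_prod E"
      by (rule inj_onI) (metis curry_case_prod)
    have "F x = (\<Sum>\<alpha>\<in>case_prod ` E. c (curry \<alpha>) * monomial \<alpha> (\<lambda>(a, b). X x a b))" for x
      unfolding E(3)
      by (rule sum.reindex_cong[OF \<open>inj_on case_prod E\<close> refl, symmetric])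
        (simp only: monomial_case_prod curry_case_prod)
    moreover have "\<forall>\<alpha>\<in>case_prod ` E. total_degree \<alpha> \<le> n"
      using E(2) by (auto simp: total_degree_case_prod)
    ultimately show "poly_in (\<lambda>x (a, b). X x a b) n F"
      unfolding poly_in_def using E(1)
      by (intro exI[of _ "case_prod ` E"] exI[of _ "\<lambda>\<alpha>. c (curry \<alpha>)"]) simp
  qed
qed

definition mat_coords :: "real^'n::finite^'n \<Rightarrow> 'n \<times> 'n \<Rightarrow> real" where
  "mat_coords M = (\<lambda>(i, j). M $ i $ j)"

definition config_coords :: "('p::finite, 'n::finite) config \<Rightarrow> 'p \<times> 'n \<Rightarrow> real" where
  "config_coords R = (\<lambda>(p, i). R p $ i)"

lemma poly_in_mat_coords_iff:
  "poly_in mat_coords n F \<longleftrightarrow>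
    (\<exists>E c. finite E \<and> (\<forall>\<beta>\<in>E. mat_deg \<beta> \<le> n) \<and> (\<forall>M. F M = (\<Sum>\<beta>\<in>E. c \<beta> * mat_mono \<beta> M)))"
  using poly_in_pair_coords_iff[of "\<lambda>M i j. M $ i $ j"]
  unfolding mat_coords_def[abs_def] mat_deg_def mat_mono_def .

lemma poly_in_config_coords_iff:
  "poly_in config_coords n F \<longleftrightarrow>
    (\<exists>E c. finite E \<and> (\<forall>\<alpha>\<in>E. cdeg \<alpha> \<le> n) \<and> (\<forall>R. F R = (\<Sum>\<alpha>\<in>E. c \<alpha> * cmono \<alpha> R)))"
  using poly_in_pair_coords_iff[of "\<lambda>R p i. R p $ i"]
  unfolding config_coords_def[abs_def] cdeg_def cmono_def .

lemma polyV_iff: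
  "f \<in> polyV n \<longleftrightarrow> (\<exists>F. poly_in config_coords n F \<and> (\<forall>R\<in>config_sphere. f R = F R))"
proof
  assume "f \<in> polyV n"
  then obtain E c where E: "finite E" "\<forall>\<alpha>\<in>E. cdeg \<alpha> \<le> n"
    and f: "\<forall>R\<in>config_sphere. f R = (\<Sum>\<alpha>\<in>E. c \<alpha> * cmono \<alpha> R)"
    unfolding polyV_def by blast
  define F where "F R = (\<Sum>\<alpha>\<in>E. c \<alpha> * cmono \<alpha> R)" for R
  have "poly_in config_coords n F"
    unfolding poly_in_config_coords_iff F_def using E by blast
  with f show "\<exists>F. poly_in config_coords n F \<and> (\<forall>R\<in>config_sphere. f R = F R)"
    unfolding F_def by blast
next
  assume "\<exists>F. poly_in config_coords n F \<and> (\<forall>R\<in>config_sphere. f R = F R)"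
  then obtain F E c where "\<forall>R\<in>config_sphere. f R = F R" "finite E" "\<forall>\<alpha>\<in>E. cdeg \<alpha> \<le> n"
    "\<forall>R. F R = (\<Sum>\<alpha>\<in>E. c \<alpha> * cmono \<alpha> R)"
    unfolding poly_in_config_coords_iff by blast
  then show "f \<in> polyV n"
    unfolding polyV_def by (intro CollectI exI[of _ E] exI[of _ c]) auto
qed

lemma quadrature_exact:
  assumes "quadrature_degree H T w Q n" "poly_in mat_coords n F"
  shows "(\<Sum>t<T. complex_of_real (w t) * F (Q t)) = integral\<^sup>L H F"
proof -
  obtain E c where "finite E" "\<forall>\<beta>\<in>E. mat_deg \<beta> \<le> n" "F = (\<lambda>M. \<Sum>\<beta>\<in>E. c \<beta> * mat_mono \<beta> M)"
    using assms(2) unfolding poly_in_mat_coords_iff by blast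
  with assms(1) show ?thesis
    unfolding quadrature_degree_def by blast
qed

lemma poly_in_mat_mult_left:
  assumes "poly_in mat_coords n F" shows "poly_in mat_coords n (\<lambda>M. F (A ** M))"
proof (rule poly_in_compose[OF assms])
  fix ij :: "'a \<times> 'a"
  obtain i j where ij: "ij = (i, j)" by fastforce
  have coord: "complex_of_real (mat_coords (A ** M) ij) =
      (\<Sum>k\<in>UNIV. complex_of_real (A $ i $ k) * complex_of_real (mat_coords M (k, j)))" for M
    by (simp add: ij mat_coords_def matrix_matrix_mult_def)
  show "poly_in mat_coords 1 (\<lambda>M. complex_of_real (mat_coords (A ** M) ij))"
    unfolding coord by (intro poly_in_linear finite)
qed

lemma poly_in_mat_mult_right:
  assumes "poly_in mat_coords n F" shows "poly_in mat_coords n (\<lambda>M. F (M ** A))"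
proof (rule poly_in_compose[OF assms])
  fix ij :: "'a \<times> 'a"
  obtain i j where ij: "ij = (i, j)" by fastforce
  have coord: "complex_of_real (mat_coords (M ** A) ij) =
      (\<Sum>k\<in>UNIV. complex_of_real (A $ k $ j) * complex_of_real (mat_coords M (i, k)))" for M
    by (simp add: ij mat_coords_def matrix_matrix_mult_def mult.commute)
  show "poly_in mat_coords 1 (\<lambda>M. complex_of_real (mat_coords (M ** A) ij))"
    unfolding coord by (intro poly_in_linear finite)
qed

lemma poly_in_transpose:
  assumes "poly_in mat_coords n F" shows "poly_in mat_coords n (\<lambda>M. F (transpose M))"
proof (rule poly_in_compose[OF assms])
  fix ij :: "'a \<times> 'a"
  obtain i j where ij: "ij = (i, j)" by fastforce
  have "mat_coords (transpose M) ij = mat_coords M (j, i)" for M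
    by (simp add: ij mat_coords_def transpose_def)
  then show "poly_in mat_coords 1 (\<lambda>M. complex_of_real (mat_coords (transpose M) ij))"
    using poly_in_coord[of mat_coords] by simp
qed

lemma poly_in_rot_act:
  assumes "poly_in config_coords n F"
  shows "poly_in config_coords n (\<lambda>R. F (rot_act Q R))"
proof (rule poly_in_compose[OF assms])
  fix pk :: "'a \<times> 'b"
  obtain p i where pk: "pk = (p, i)" by fastforce
  have coord: "complex_of_real (config_coords (rot_act Q R) pk) =
      (\<Sum>k\<in>UNIV. complex_of_real (Q $ i $ k) * complex_of_real (config_coords R (p, k)))" for R
    by (simp add: pk config_coords_def rot_act_def matrix_vector_mult_def)
  show "poly_in config_coords 1 (\<lambda>R. complex_of_real (config_coords (rot_act Q R) pk))"
    unfolding coord by (intro poly_in_linear finite)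
qed

lemma poly_in_rot_act_matrix:
  assumes "poly_in config_coords n F"
  shows "poly_in mat_coords n (\<lambda>M. F (rot_act M R))"
proof (rule poly_in_compose[OF assms])
  fix pk :: "'a \<times> 'b"
  obtain p i where pk: "pk = (p, i)" by fastforce
  have coord: "complex_of_real (config_coords (rot_act M R) pk) =
      (\<Sum>k\<in>UNIV. complex_of_real (R p $ k) * complex_of_real (mat_coords M (i, k)))" for M
    by (simp add: pk mat_coords_def config_coords_def rot_act_def matrix_vector_mult_def
        mult.commute)
  show "poly_in mat_coords 1 (\<lambda>M. complex_of_real (config_coords (rot_act M R) pk))"
    unfolding coord by (intro poly_in_linear finite)
qed

section \<open>Rotations and quadrature on SO(d+1)\<close>

lemma SO_transpose: "Q \<in> SO \<Longrightarrow> transpose Q \<in> SO"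
  by (simp add: SO_def)

lemma SO_mult_transpose: "Q \<in> SO \<Longrightarrow> Q ** transpose Q = mat 1"
  by (simp add: SO_def orthogonal_matrix_def)

lemma norm_SO_mult: "Q \<in> SO \<Longrightarrow> norm (Q *v x) = norm x"
  unfolding SO_def
  by (metis (mono_tags) mem_Collect_eq orthogonal_transformation_matrix
      orthogonal_transformation_norm matrix_vector_mul_linear matrix_of_matrix_vector_mul)

lemma rot_act_sphere: "Q \<in> SO \<Longrightarrow> R \<in> config_sphere \<Longrightarrow> rot_act Q R \<in> config_sphere"
  by (simp add: config_sphere_def rot_act_def norm_SO_mult)

lemma rot_act_rot_act: "rot_act A (rot_act B R) = rot_act (A ** B) R"
  by (simp add: rot_act_def matrix_vector_mul_assoc)

lemma rot_act_id: "rot_act (mat 1) R = R"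
  by (simp add: rot_act_def)

lemma mat_coords_measurable: "(\<lambda>M. mat_coords M ij) \<in> borel_measurable borel"
  unfolding mat_coords_def
  by (cases ij) (simp, intro borel_measurable_continuous_onI continuous_intros)

lemma mat_mult_left_measurable: "(\<lambda>M::real^'n::finite^'n. A ** M) \<in> borel_measurable borel"
  unfolding matrix_matrix_mult_def
  by (intro borel_measurable_continuous_onI continuous_on_vec_lambda continuous_intros)

lemma haar_integral_left_translate:
  fixes F :: "real^'n::finite^'n \<Rightarrow> complex"
  assumes "is_haar_SO H" "A \<in> SO" "F \<in> borel_measurable borel"
  shows "integral\<^sup>L H (\<lambda>M. F (A ** M)) = integral\<^sup>L H F"
proof -
  have distr: "distr H borel (\<lambda>M. A ** M) = H" and sets: "sets H = sets borel"
    using assms(1,2) unfolding is_haar_SO_def by blast+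
  have "(\<lambda>M. A ** M) \<in> H \<rightarrow>\<^sub>M borel"
    using mat_mult_left_measurable measurable_cong_sets[OF sets refl] by blast
  then have "integral\<^sup>L (distr H borel (\<lambda>M. A ** M)) F = integral\<^sup>L H (\<lambda>M. F (A ** M))"
    using assms(3) by (rule integral_distr)
  then show ?thesis
    unfolding distr by simp
qed

locale SO_quadrature =
  fixes H :: "(real^'n::finite^'n) measure" and T :: nat and w :: "nat \<Rightarrow> real"
    and Q :: "nat \<Rightarrow> real^'n^'n" and n :: nat
  assumes haar: "is_haar_SO H"
    and exact: "quadrature_degree H T w Q n"
    and weights_sum: "(\<Sum>t<T. w t) = 1"
begin

lemma nodes_SO: "t < T \<Longrightarrow> Q t \<in> SO"
  using exact unfolding quadrature_degree_def by blast

lemma nodes_nonempty: "0 < T"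
  using weights_sum by (cases T) auto

lemma weighted_sum_const: "(\<Sum>t<T. complex_of_real (w t) * c) = c"
  using weights_sum by (metis mult_1 of_real_1 of_real_sum sum_distrib_right)

lemma quadrature_left_translate:
  assumes "A \<in> SO" "poly_in mat_coords n F"
  shows "(\<Sum>t<T. complex_of_real (w t) * F (A ** Q t)) = integral\<^sup>L H F"
proof -
  have "(\<Sum>t<T. complex_of_real (w t) * F (A ** Q t)) = integral\<^sup>L H (\<lambda>M. F (A ** M))"
    using quadrature_exact[OF exact poly_in_mat_mult_left[OF assms(2)]] .
  also have "\<dots> = integral\<^sup>L H F"
    using haar_integral_left_translate[OF haar assms(1)]
      poly_in_measurable[OF assms(2) mat_coords_measurable] by blast
  finally show ?thesis .
qed

text \<open>Only left invariance of the Haar measure is available. Evaluating the double sum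
  \<open>\<Sum>\<^sub>s \<Sum>\<^sub>t w\<^sub>s w\<^sub>t F(Q\<^sub>s\<^sup>T Q\<^sub>t)\<close> in both orders shows that the rule cannot tell \<open>F\<close> from
  \<open>F \<circ> transpose\<close>, which converts left into right invariance.\<close>

lemma quadrature_transpose:
  assumes F: "poly_in mat_coords n F"
  shows "(\<Sum>t<T. complex_of_real (w t) * F (Q t)) =
    (\<Sum>t<T. complex_of_real (w t) * F (transpose (Q t)))"
proof -
  let ?w = "\<lambda>t. complex_of_real (w t)"
  define G where "G M = F (transpose M)" for M
  have G: "poly_in mat_coords n G"
    unfolding G_def by (rule poly_in_transpose[OF F])
  have "(\<Sum>t<T. ?w t * F (Q t)) = integral\<^sup>L H F"
    by (rule quadrature_exact[OF exact F])
  also have "\<dots> = (\<Sum>s<T. ?w s * integral\<^sup>L H F)"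
    by (rule weighted_sum_const[symmetric])
  also have "\<dots> = (\<Sum>s<T. ?w s * (\<Sum>t<T. ?w t * F (transpose (Q s) ** Q t)))"
    by (intro sum.cong refl) (simp add: quadrature_left_translate[OF SO_transpose[OF nodes_SO] F])
  also have "\<dots> = (\<Sum>t<T. ?w t * (\<Sum>s<T. ?w s * G (transpose (Q t) ** Q s)))"
    unfolding sum_distrib_left
    by (subst sum.swap) (simp add: G_def matrix_transpose_mul mult.left_commute)
  also have "\<dots> = (\<Sum>t<T. ?w t * integral\<^sup>L H G)"
    by (intro sum.cong refl) (simp add: quadrature_left_translate[OF SO_transpose[OF nodes_SO] G])
  also have "\<dots> = integral\<^sup>L H G"
    by (rule weighted_sum_const)
  also have "\<dots> = (\<Sum>t<T. ?w t * F (transpose (Q t)))"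
    unfolding quadrature_exact[OF exact G, symmetric] G_def ..
  finally show ?thesis .
qed

lemma quadrature_right_translate:
  assumes F: "poly_in mat_coords n F" and A: "A \<in> SO"
  shows "(\<Sum>t<T. complex_of_real (w t) * F (Q t ** A)) = (\<Sum>t<T. complex_of_real (w t) * F (Q t))"
proof -
  let ?w = "\<lambda>t. complex_of_real (w t)"
  define G where "G M = F (transpose M)" for M
  have G: "poly_in mat_coords n G"
    unfolding G_def by (rule poly_in_transpose[OF F])
  have "(\<Sum>t<T. ?w t * F (Q t ** A)) = (\<Sum>t<T. ?w t * F (transpose (Q t) ** A))"
    using quadrature_transpose[OF poly_in_mat_mult_right[OF F]] .
  also have "\<dots> = (\<Sum>t<T. ?w t * G (transpose A ** Q t))"
    by (simp add: G_def matrix_transpose_mul)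
  also have "\<dots> = integral\<^sup>L H G"
    by (rule quadrature_left_translate[OF SO_transpose[OF A] G])
  also have "\<dots> = (\<Sum>t<T. ?w t * F (transpose (Q t)))"
    unfolding quadrature_exact[OF exact G, symmetric] G_def ..
  also have "\<dots> = (\<Sum>t<T. ?w t * F (Q t))"
    by (rule quadrature_transpose[OF F, symmetric])
  finally show ?thesis .
qed

end

definition orbit_average ::
  "nat \<Rightarrow> (nat \<Rightarrow> real) \<Rightarrow> (nat \<Rightarrow> real^'n^'n) \<Rightarrow>
    (('p, 'n::finite) config \<Rightarrow> complex) \<Rightarrow> ('p, 'n) config \<Rightarrow> complex"
  where "orbit_average T w Q F R = (\<Sum>t<T. complex_of_real (w t) * F (rot_act (Q t) R))"

lemma poly_in_orbit_average:
  "poly_in config_coords k F \<Longrightarrow> poly_in config_coords k (orbit_average T w Q F)"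
  unfolding orbit_average_def by (intro poly_in_sum poly_in_cmult poly_in_rot_act) simp

lemma (in SO_quadrature) orbit_average_rot_act:
  assumes "poly_in config_coords k F" "k \<le> n" "A \<in> SO"
  shows "orbit_average T w Q F (rot_act A R) = orbit_average T w Q F R"
proof -
  have "poly_in mat_coords n (\<lambda>M. F (rot_act M R))"
    using poly_in_mono[OF poly_in_rot_act_matrix[OF assms(1)] assms(2)] .
  from quadrature_right_translate[OF this assms(3)] show ?thesis
    unfolding orbit_average_def rot_act_rot_act .
qed

lemma (in SO_quadrature) rot_invariant_orbit_average:
  "poly_in config_coords k F \<Longrightarrow> k \<le> n \<Longrightarrow> rot_invariant (orbit_average T w Q F)"
  unfolding rot_invariant_def by (simp add: orbit_average_rot_act)

section \<open>The configuration measure and symmetrisation\<close>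

lemma prob_space_sphere_measure: "prob_space (sphere_measure :: (real^'n::finite) measure)"
  unfolding sphere_measure_def
proof (intro prob_space.prob_space_distr prob_space_uniform_measure)
  have "unit_ball_vol (real CARD('n)) \<noteq> 0"
    using unit_ball_vol_pos[of "real CARD('n)"] by (metis of_nat_0_le_iff order_less_irrefl)
  then show "emeasure lborel (ball (0::real^'n) 1) \<noteq> 0"
    by (simp add: emeasure_ball)
  show "emeasure lborel (ball (0::real^'n) 1) \<noteq> \<infinity>"
    using emeasure_lborel_ball_finite[of "0::real^'n" 1] by simp
qed (simp add: measurable_cong_sets[OF sets_uniform_measure refl])

lemma prob_space_config_measure:
  "prob_space (config_measure :: ('p::finite, 'n::finite) config measure)"
  unfolding config_measure_def by (intro prob_space_PiM prob_space_sphere_measure)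

lemma AE_sphere_measure_norm: "AE x in (sphere_measure :: (real^'n::finite) measure). norm x = 1"
proof -
  have "AE x in lborel. x \<in> ball (0::real^'n) 1 \<longrightarrow> norm (x /\<^sub>R norm x) = 1"
    using AE_lborel_singleton[of 0] by eventually_elim simp
  then have "AE x in uniform_measure lborel (ball (0::real^'n) 1). norm (x /\<^sub>R norm x) = 1"
    by (intro AE_uniform_measureI) auto
  then show ?thesis
    unfolding sphere_measure_def
    by (subst AE_distr_iff) (auto simp: measurable_cong_sets[OF sets_uniform_measure refl])
qed

lemma AE_config_sphere:
  "AE R in config_measure. R \<in> (config_sphere :: ('p::finite, 'n::finite) config set)"
proof -
  have "AE R in config_measure. norm ((R::('p, 'n) config) p) = 1" for p
    unfolding config_measure_def
    by (rule AE_PiM_component[OF prob_space_sphere_measure _ AE_sphere_measure_norm]) simp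
  then have "AE R in config_measure. \<forall>p\<in>UNIV. norm ((R::('p, 'n) config) p) = 1"
    by (subst AE_finite_all) auto
  then show ?thesis
    unfolding config_sphere_def by simp
qed

lemma config_component_measurable [measurable]:
  "(\<lambda>R. (R::('p::finite, 'n::finite) config) p) \<in> borel_measurable config_measure"
proof -
  have "sets (sphere_measure :: (real^'n) measure) = sets borel"
    by (simp add: sphere_measure_def)
  moreover have "(\<lambda>R. (R::('p, 'n) config) p) \<in> config_measure \<rightarrow>\<^sub>M sphere_measure"
    unfolding config_measure_def by (rule measurable_component_singleton) simp
  ultimately show ?thesis
    using measurable_cong_sets[OF refl] by blast
qed

lemma config_coords_measurable: "(\<lambda>R. config_coords R pk) \<in> borel_measurable config_measure"
  unfolding config_coords_def
  by (cases pk) (simp add: measurable_compose[OF config_component_measurable borel_measurable_nth])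

lemma config_sphere_sets:
  "config_sphere \<in> sets (config_measure :: ('p::finite, 'n::finite) config measure)"
proof -
  have "{R \<in> space config_measure. \<forall>p\<in>UNIV. norm ((R::('p, 'n) config) p) = 1}
      \<in> sets config_measure"
    by measurable
  then show ?thesis
    by (simp add: config_sphere_def config_measure_def space_PiM sphere_measure_def)
qed

lemma L2_poly_in:
  assumes "poly_in config_coords k (F :: ('p::finite, 'n::finite) config \<Rightarrow> complex)"
  shows "F \<in> L2"
proof -
  have F_meas: "F \<in> borel_measurable config_measure"
    using assms config_coords_measurable by (rule poly_in_measurable)
  have "\<bar>config_coords R pk\<bar> \<le> 1" if "R \<in> config_sphere" for R :: "('p, 'n) config" and pk
    using that component_le_norm_cart[of "R (fst pk)" "snd pk"]
    by (auto simp: config_coords_def config_sphere_def split: prod.splits)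
  then obtain C where C: "\<forall>R\<in>config_sphere. cmod (F R) \<le> C"
    using poly_in_bounded[OF assms] by blast
  have "AE R in config_measure. norm ((cmod (F R))\<^sup>2) \<le> C\<^sup>2"
    using AE_config_sphere by eventually_elim (use C in \<open>auto intro: power_mono\<close>)
  then have "integrable config_measure (\<lambda>R. (cmod (F R))\<^sup>2)"
    using F_meas
    by (intro finite_measure.integrable_const_bound
        [OF prob_space.finite_measure[OF prob_space_config_measure]]) measurable
  with F_meas show ?thesis
    unfolding L2_def by blast
qed

lemma cmod_diff_square_le: "(cmod (a - b))\<^sup>2 \<le> 2 * (cmod a)\<^sup>2 + 2 * (cmod b)\<^sup>2"
proof -
  have "(cmod (a - b))\<^sup>2 \<le> (cmod a + cmod b)\<^sup>2"
    using norm_triangle_ineq4[of a b] by (intro power_mono) auto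
  also have "\<dots> \<le> 2 * (cmod a)\<^sup>2 + 2 * (cmod b)\<^sup>2"
    using sum_squares_ge_zero[of "cmod a - cmod b" 0] by (simp add: power2_eq_square algebra_simps)
  finally show ?thesis .
qed

lemma L2_diff:
  assumes "f \<in> L2" "g \<in> L2"
  shows "(\<lambda>R. f R - g R) \<in> L2"
proof -
  have [measurable]: "f \<in> borel_measurable config_measure" "g \<in> borel_measurable config_measure"
    using assms unfolding L2_def by blast+
  have "integrable config_measure (\<lambda>R. 2 * (cmod (f R))\<^sup>2 + 2 * (cmod (g R))\<^sup>2)"
    using assms unfolding L2_def by simp
  then have "integrable config_measure (\<lambda>R. (cmod (f R - g R))\<^sup>2)"
    by (rule Bochner_Integration.integrable_bound) (auto intro: cmod_diff_square_le)
  then show ?thesis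
    unfolding L2_def by simp
qed

lemma sym_spec:
  assumes "g0 \<in> L2" "rot_invariant g0" "\<forall>R\<in>config_sphere. g R = g0 R"
  shows "sym g \<in> L2 \<and> rot_invariant (sym g) \<and>
    (\<forall>u\<in>L2. rot_invariant u \<longrightarrow> L2inner (\<lambda>R. g R - sym g R) u = 0)"
  unfolding sym_def
proof (rule someI[of _ g0], intro conjI ballI impI assms(1,2))
  fix u :: "('a, 'b) config \<Rightarrow> complex"
  have "AE R in config_measure. (g R - g0 R) * cnj (u R) = 0"
    using AE_config_sphere by eventually_elim (use assms(3) in simp)
  then show "L2inner (\<lambda>R. g R - g0 R) u = 0"
    unfolding L2inner_def by (rule integral_eq_zero_AE)
qed

lemma eps_sym_eq_0:
  fixes g g0 :: "('p::finite, 'n::finite) config \<Rightarrow> complex"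
  assumes g0: "g0 \<in> L2" "rot_invariant g0" and eq: "\<forall>R\<in>config_sphere. g R = g0 R"
  shows "eps_sym g = 0"
proof -
  let ?S = "config_sphere :: ('p, 'n) config set"
  define h where "h = sym g"
  have h: "h \<in> L2" "rot_invariant h" "\<forall>u\<in>L2. rot_invariant u \<longrightarrow> L2inner (\<lambda>R. g R - h R) u = 0"
    using sym_spec[OF assms] unfolding h_def by blast+
  text \<open>Cutting off outside the sphere makes \<open>(g - h) * cnj u\<close> equal to \<open>\<bar>u\<bar>\<^sup>2\<close> everywhere,
    so no measurability of \<open>g\<close> is needed.\<close>
  define u where "u R = indicator ?S R * (g0 R - h R)" for R
  have [measurable]: "g0 \<in> borel_measurable config_measure" "h \<in> borel_measurable config_measure"
    "?S \<in> sets config_measure"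
    using g0(1) h(1) config_sphere_sets unfolding L2_def by blast+
  have "integrable config_measure (\<lambda>R. (cmod (g0 R - h R))\<^sup>2)"
    using L2_diff[OF g0(1) h(1)] unfolding L2_def by blast
  then have u_sq_int: "integrable config_measure (\<lambda>R. (cmod (u R))\<^sup>2)"
    by (rule Bochner_Integration.integrable_bound)
      (auto simp: u_def indicator_def norm_mult)
  have "u \<in> L2"
    using u_sq_int unfolding L2_def u_def by simp
  moreover have "rot_invariant u"
    using g0(2) h(2) unfolding rot_invariant_def u_def by (simp add: rot_act_sphere indicator_def)
  ultimately have orth: "integral\<^sup>L config_measure (\<lambda>R. (g R - h R) * cnj (u R)) = 0"
    using h(3) unfolding L2inner_def by blast
  have pointwise: "(g R - h R) * cnj (u R) = complex_of_real ((cmod (u R))\<^sup>2)" for R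
  proof (cases "R \<in> ?S")
    case True
    then have "u R = g R - h R"
      using eq by (simp add: u_def)
    then show ?thesis
      by (simp only: complex_norm_square)
  qed (simp add: u_def)
  have "complex_of_real (integral\<^sup>L config_measure (\<lambda>R. (cmod (u R))\<^sup>2)) = 0"
    unfolding integral_complex_of_real[symmetric] pointwise[symmetric] by (rule orth)
  then have "integral\<^sup>L config_measure (\<lambda>R. (cmod (u R))\<^sup>2) = 0"
    by simp
  then have "AE R in config_measure. (cmod (u R))\<^sup>2 = 0"
    using integral_nonneg_eq_0_iff_AE[OF u_sq_int] by simp
  then have "AE R in config_measure. (cmod (g R - h R))\<^sup>2 = 0"
    using AE_config_sphere by eventually_elim (simp add: u_def eq)
  then show ?thesis
    unfolding eps_sym_def L2norm_def h_def[symmetric] by (simp add: integral_eq_zero_AE)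
qed

section \<open>The augmented least-squares problem\<close>

lemma weighted_sq_dist_decomposition:
  fixes w :: "nat \<Rightarrow> real" and u :: "nat \<Rightarrow> complex"
  assumes "(\<Sum>t<T. w t) = 1"
  defines "m \<equiv> (\<Sum>t<T. complex_of_real (w t) * u t)"
  shows "(\<Sum>t<T. w t * (cmod (u t - y))\<^sup>2) = (cmod (m - y))\<^sup>2 + (\<Sum>t<T. w t * (cmod (u t - m))\<^sup>2)"
proof -
  have expand: "(cmod (u t - y))\<^sup>2 =
      (cmod (u t - m))\<^sup>2 + (cmod (m - y))\<^sup>2 + 2 * Re ((u t - m) * cnj (m - y))" for t
    unfolding cmod_power2 by (simp add: power2_eq_square algebra_simps)
  have "(\<Sum>t<T. complex_of_real (w t) * (u t - m)) = m - complex_of_real (\<Sum>t<T. w t) * m"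
    by (simp add: m_def right_diff_distrib sum_subtractf sum_distrib_right)
  then have centred: "(\<Sum>t<T. complex_of_real (w t) * (u t - m)) = 0"
    using assms(1) by simp
  have "(\<Sum>t<T. w t * Re ((u t - m) * cnj (m - y))) =
      Re ((\<Sum>t<T. complex_of_real (w t) * (u t - m)) * cnj (m - y))"
    by (simp add: sum_distrib_right mult.assoc)
  then have "(\<Sum>t<T. w t * Re ((u t - m) * cnj (m - y))) = 0"
    by (simp add: centred)
  moreover have "(\<Sum>t<T. w t * (cmod (u t - y))\<^sup>2) = (\<Sum>t<T. w t * (cmod (u t - m))\<^sup>2)
      + (\<Sum>t<T. w t) * (cmod (m - y))\<^sup>2 + 2 * (\<Sum>t<T. w t * Re ((u t - m) * cnj (m - y)))"
    unfolding expand distrib_left mult.left_commute[of "w _" 2]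
    by (simp only: sum.distrib sum_distrib_left[symmetric] sum_distrib_right[symmetric])
  ultimately show ?thesis
    using assms(1) by simp
qed

lemma eq_mean_if_weighted_sq_loss_le:
  fixes w :: "nat \<Rightarrow> real" and u :: "nat \<Rightarrow> nat \<Rightarrow> complex"
  assumes pos: "\<forall>t<T. 0 < w t" and sum_1: "(\<Sum>t<T. w t) = 1"
    and le: "(\<Sum>i<N. \<Sum>t<T. w t * (cmod (u t i - Y i))\<^sup>2)
      \<le> (\<Sum>i<N. (cmod ((\<Sum>s<T. complex_of_real (w s) * u s i) - Y i))\<^sup>2)"
    and "t < T" "i < N"
  shows "u t i = (\<Sum>s<T. complex_of_real (w s) * u s i)"
proof -
  define m where "m j = (\<Sum>s<T. complex_of_real (w s) * u s j)" for j
  have nonneg: "0 \<le> w s * (cmod (u s j - m j))\<^sup>2" if "s < T" for s j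
    using pos that by (simp add: less_imp_le)
  have decomposition: "(\<Sum>s<T. w s * (cmod (u s j - Y j))\<^sup>2)
      = (cmod (m j - Y j))\<^sup>2 + (\<Sum>s<T. w s * (cmod (u s j - m j))\<^sup>2)" for j
    unfolding m_def by (rule weighted_sq_dist_decomposition[OF sum_1])
  have "(\<Sum>j<N. \<Sum>s<T. w s * (cmod (u s j - Y j))\<^sup>2) \<le> (\<Sum>j<N. (cmod (m j - Y j))\<^sup>2)"
    using le by (simp only: m_def)
  then have "(\<Sum>j<N. \<Sum>s<T. w s * (cmod (u s j - m j))\<^sup>2) \<le> 0"
    by (simp add: decomposition sum.distrib)
  then have "(\<Sum>j<N. \<Sum>s<T. w s * (cmod (u s j - m j))\<^sup>2) = 0"
    using nonneg by (intro antisym sum_nonneg) auto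
  then have "(\<Sum>s<T. w s * (cmod (u s i - m i))\<^sup>2) = 0"
    using \<open>i < N\<close> nonneg by (subst (asm) sum_nonneg_eq_0_iff) (auto intro: sum_nonneg)
  then have "w t * (cmod (u t i - m i))\<^sup>2 = 0"
    using \<open>t < T\<close> nonneg by (subst (asm) sum_nonneg_eq_0_iff) auto
  then show ?thesis
    using pos \<open>t < T\<close> unfolding m_def by fastforce
qed

lemma L_aug_of_representation:
  assumes "\<forall>R\<in>config_sphere. g R = (\<Sum>j<m. c j * \<phi> j R)"
    and "\<forall>t<T. Q t \<in> SO" "\<forall>i<npts. Rs i \<in> config_sphere"
  shows "L_aug \<phi> m Rs npts Y T w Q c
    = 1/2 * (\<Sum>i<npts. \<Sum>t<T. w t * (cmod (g (rot_act (Q t) (Rs i)) - Y i))\<^sup>2)"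
proof -
  have "(\<Sum>j<m. \<phi> j (rot_act (Q t) (Rs i)) * c j) = g (rot_act (Q t) (Rs i))"
    if "t \<in> {..<T}" "i \<in> {..<npts}" for t i
  proof -
    have "rot_act (Q t) (Rs i) \<in> config_sphere"
      using assms(2,3) that by (simp add: rot_act_sphere)
    then show ?thesis
      using assms(1) by (simp add: mult.commute)
  qed
  then have "L_aug \<phi> m Rs npts Y T w Q c
      = 1/2 * (\<Sum>t<T. \<Sum>i<npts. w t * (cmod (g (rot_act (Q t) (Rs i)) - Y i))\<^sup>2)"
    unfolding L_aug_def sum_distrib_left by simp
  then show ?thesis
    by (subst (asm) sum.swap)
qed

lemma (in SO_quadrature) L_aug_minimiser_constant_on_orbits:
  assumes pos: "\<forall>t<T. 0 < w t" and points: "\<forall>i<npts. Rs i \<in> config_sphere"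
    and F: "poly_in config_coords k F" "k \<le> n"
    and \<beta>: "\<forall>R\<in>config_sphere. F R = (\<Sum>j<m. \<beta> j * \<phi> j R)"
    and \<gamma>: "\<forall>R\<in>config_sphere. orbit_average T w Q F R = (\<Sum>j<m. \<gamma> j * \<phi> j R)"
    and minimal: "L_aug \<phi> m Rs npts Y T w Q \<beta> \<le> L_aug \<phi> m Rs npts Y T w Q \<gamma>"
    and "t < T" "i < npts"
  shows "F (rot_act (Q t) (Rs i)) = orbit_average T w Q F (Rs i)"
proof -
  let ?a = "orbit_average T w Q F"
  have "L_aug \<phi> m Rs npts Y T w Q \<gamma>
      = 1/2 * (\<Sum>i<npts. \<Sum>t<T. w t * (cmod (?a (rot_act (Q t) (Rs i)) - Y i))\<^sup>2)"
    by (rule L_aug_of_representation[OF \<gamma> _ points]) (simp add: nodes_SO)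
  also have "\<dots> = 1/2 * (\<Sum>i<npts. \<Sum>t<T. w t * (cmod (?a (Rs i) - Y i))\<^sup>2)"
    by (intro arg_cong[where f = "(*) (1/2)"] sum.cong refl)
      (simp add: orbit_average_rot_act[OF F nodes_SO])
  also have "\<dots> = 1/2 * (\<Sum>i<npts. (cmod (?a (Rs i) - Y i))\<^sup>2)"
    by (simp add: sum_distrib_right[symmetric] weights_sum)
  finally have "L_aug \<phi> m Rs npts Y T w Q \<gamma> = 1/2 * (\<Sum>i<npts. (cmod (?a (Rs i) - Y i))\<^sup>2)" .
  moreover have "L_aug \<phi> m Rs npts Y T w Q \<beta>
      = 1/2 * (\<Sum>i<npts. \<Sum>t<T. w t * (cmod (F (rot_act (Q t) (Rs i)) - Y i))\<^sup>2)"
    by (rule L_aug_of_representation[OF \<beta> _ points]) (simp add: nodes_SO)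
  ultimately have "(\<Sum>i<npts. \<Sum>t<T. w t * (cmod (F (rot_act (Q t) (Rs i)) - Y i))\<^sup>2)
      \<le> (\<Sum>i<npts. (cmod ((\<Sum>s<T. complex_of_real (w s) * F (rot_act (Q s) (Rs i))) - Y i))\<^sup>2)"
    using minimal unfolding orbit_average_def by simp
  from eq_mean_if_weighted_sq_loss_le[where u = "\<lambda>t i. F (rot_act (Q t) (Rs i))",
      OF pos weights_sum this \<open>t < T\<close> \<open>i < npts\<close>]
  show ?thesis
    unfolding orbit_average_def .
qed

lemma polyV_unisolvent:
  assumes span: "span_on \<phi> {..<m} = polyV K"
    and full_rank: "\<forall>c. (\<forall>i<npts. (\<Sum>j<m. \<phi> j (Rs i) * c j) = 0) \<longrightarrow> (\<forall>j<m. c j = 0)"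
    and points: "\<forall>i<npts. Rs i \<in> config_sphere"
    and "g \<in> polyV K" "\<forall>i<npts. g (Rs i) = 0" "R \<in> config_sphere"
  shows "g R = 0"
proof -
  obtain c where c: "\<forall>R\<in>config_sphere. g R = (\<Sum>j<m. c j * \<phi> j R)"
    using assms(4) span unfolding span_on_def by blast
  have "\<forall>i<npts. (\<Sum>j<m. \<phi> j (Rs i) * c j) = 0"
    using c points assms(5) by (simp add: mult.commute)
  then have "\<forall>j<m. c j = 0"
    using full_rank by blast
  then show ?thesis
    using c assms(6) by simp
qed

lemma eq_on_sphere_if_eq_at_rotated_points:
  assumes span: "span_on \<phi> {..<m} = polyV K"
    and full_rank: "\<forall>c. (\<forall>i<npts. (\<Sum>j<m. \<phi> j (Rs i) * c j) = 0) \<longrightarrow> (\<forall>j<m. c j = 0)"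
    and points: "\<forall>i<npts. Rs i \<in> config_sphere"
    and F: "poly_in config_coords K F" and G: "poly_in config_coords K G"
    and A: "A \<in> SO" and eq: "\<forall>i<npts. F (rot_act A (Rs i)) = G (rot_act A (Rs i))"
    and R: "R \<in> config_sphere"
  shows "F R = G R"
proof -
  define R' where "R' = rot_act (transpose A) R"
  have "R' \<in> config_sphere"
    unfolding R'_def using A R by (simp add: SO_transpose rot_act_sphere)
  have "rot_act A R' = R"
    unfolding R'_def rot_act_rot_act SO_mult_transpose[OF A] by (rule rot_act_id)
  have "poly_in config_coords K (\<lambda>R. F (rot_act A R) - G (rot_act A R))"
    by (intro poly_in_diff poly_in_rot_act F G)
  then have "(\<lambda>R. F (rot_act A R) - G (rot_act A R)) \<in> polyV K"
    unfolding polyV_iff by blast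
  then have "(\<lambda>R. F (rot_act A R) - G (rot_act A R)) R' = 0"
    by (rule polyV_unisolvent[OF span full_rank points _ _ \<open>R' \<in> config_sphere\<close>]) (simp add: eq)
  then show ?thesis
    unfolding \<open>rot_act A R' = R\<close> by simp
qed

lemma (in SO_quadrature) L_aug_minimiser_eq_orbit_average:
  assumes span: "span_on \<phi> {..<m} = polyV K"
    and full_rank: "\<forall>c. (\<forall>i<npts. (\<Sum>j<m. \<phi> j (Rs i) * c j) = 0) \<longrightarrow> (\<forall>j<m. c j = 0)"
    and points: "\<forall>i<npts. Rs i \<in> config_sphere" and pos: "\<forall>t<T. 0 < w t"
    and F: "poly_in config_coords K F" "K \<le> n"
    and \<beta>: "\<forall>R\<in>config_sphere. F R = (\<Sum>j<m. \<beta> j * \<phi> j R)"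
    and minimiser: "\<forall>\<gamma>. L_aug \<phi> m Rs npts Y T w Q \<beta> \<le> L_aug \<phi> m Rs npts Y T w Q \<gamma>"
    and R: "R \<in> config_sphere"
  shows "F R = orbit_average T w Q F R"
proof -
  let ?a = "orbit_average T w Q F"
  have a: "poly_in config_coords K ?a"
    using F(1) by (rule poly_in_orbit_average)
  then have "?a \<in> span_on \<phi> {..<m}"
    unfolding span polyV_iff by blast
  then obtain \<gamma> where \<gamma>: "\<forall>R\<in>config_sphere. ?a R = (\<Sum>j<m. \<gamma> j * \<phi> j R)"
    unfolding span_on_def by blast
  have "F (rot_act (Q 0) (Rs i)) = ?a (rot_act (Q 0) (Rs i))" if "i < npts" for i
    using L_aug_minimiser_constant_on_orbits[OF pos points F \<beta> \<gamma> minimiser[rule_format] nodes_nonempty that]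
      orbit_average_rot_act[OF F nodes_SO[OF nodes_nonempty]]
    by simp
  then show ?thesis
    using eq_on_sphere_if_eq_at_rotated_points[OF span full_rank points F(1) a
        nodes_SO[OF nodes_nonempty] _ R] by blast
qed

theorem mainTheorem6:
  fixes \<phi> :: "nat \<Rightarrow> ('p::finite,'n::finite) config \<Rightarrow> complex"
    and K m mI npts T nd :: nat
    and Rs :: "nat \<Rightarrow> ('p,'n) config"
    and f :: "('p,'n) config \<Rightarrow> complex"
    and w :: "nat \<Rightarrow> real"
    and Q :: "nat \<Rightarrow> real^'n^'n"
    and H :: "(real^'n^'n) measure"
    and \<beta> :: "nat \<Rightarrow> complex"
  assumes basis_V: "\<forall>j<m. \<phi> j \<in> polyV K" "span_on \<phi> {..<m} = polyV K"
    and orthonormal: "\<forall>j<m. \<forall>k<m. L2inner (\<phi> j) (\<phi> k) = (if j = k then 1 else 0)"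
    and basis_B: "mI \<le> m" "span_on \<phi> {..<mI} = polyB K"
    and points: "\<forall>i<npts. Rs i \<in> config_sphere"
    and target: "rot_invariant f"
    and full_rank: "\<forall>c. (\<forall>i<npts. (\<Sum>j<m. \<phi> j (Rs i) * c j) = 0) \<longrightarrow> (\<forall>j<m. c j = 0)"
    and haar: "is_haar_SO H"
    and weights: "\<forall>t<T. w t > 0" "(\<Sum>t<T. w t) = 1"
    and quad: "quadrature_degree H T w Q nd" "nd \<ge> K"
    and minimiser: "\<forall>\<gamma>. L_aug \<phi> m Rs npts (\<lambda>i. f (Rs i)) T w Q \<beta>
                          \<le> L_aug \<phi> m Rs npts (\<lambda>i. f (Rs i)) T w Q \<gamma>"
  shows "eps_sym (\<lambda>R. \<Sum>j<m. \<beta> j * \<phi> j R) = 0"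
proof -
  interpret SO_quadrature H T w Q nd
    using haar quad(1) weights(2) by unfold_locales
  have "(\<lambda>R. \<Sum>j<m. \<beta> j * \<phi> j R) \<in> polyV K"
    using basis_V(2) unfolding span_on_def by blast
  then obtain F where F: "poly_in config_coords K F"
    and P_A: "\<forall>R\<in>config_sphere. (\<Sum>j<m. \<beta> j * \<phi> j R) = F R"
    unfolding polyV_iff by blast
  then have "\<forall>R\<in>config_sphere. F R = (\<Sum>j<m. \<beta> j * \<phi> j R)"
    by simp
  from L_aug_minimiser_eq_orbit_average[OF basis_V(2) full_rank points weights(1) F quad(2) this minimiser]
  have "\<forall>R\<in>config_sphere. (\<Sum>j<m. \<beta> j * \<phi> j R) = orbit_average T w Q F R"
    using P_A by simp
  then show ?thesis
    by (rule eps_sym_eq_0[OF L2_poly_in[OF poly_in_orbit_average[OF F]]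
          rot_invariant_orbit_average[OF F quad(2)]])
qed

end
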